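(* For a $d$-dimensional state ensemble $\Omega=\{(p_j,\rho_j)\}_{j=0}^{k-1}$, the optimal discrimination probability $P_{\mathrm{suc}}(\Omega)=\max_{\text{POVMs }\{E_j\}}\sum_j p_j\mathrm{tr}(E_j\rho_j)$ can be achieved by quantum state discrimination via incoherent operations; i.e. $P_{\mathrm{suc}}(\Omega)=\widetilde{P}_{\mathrm{suc,IO}}(\Omega)=\widetilde{P}_{\mathrm{suc,MIO}}(\Omega)$.
   Context: Quantum state discrimination via free operations: for a set of free operations $\mathcal{O}$, $\widetilde{P}_{\mathrm{suc},\mathcal{O}}(\Omega)=\sup\sum_j p_j\mathrm{tr}[\mathcal{N}_{A\to BA'}(\rho_j)(|j\rangle\langle j|_B\otimes I_{A'})]$ over channels $\mathcal{N}_{A\to BA'}\in\mathcal{O}$, with $\dim B=k$, $A'\cong A$, and $\{|j\rangle\}$ the computational basis (i.e. apply $\mathcal{N}$ then measure $B$ in the computational basis). Incoherent states are diagonal in the computational basis. IO (incoherent operations) are channels with a Kraus decomposition $\{K_n\}$ such that each $K_n\rho K_n^\dagger$ is incoherent (up to normalization) for every incoherent $\rho$; MIO are channels mapping incoherent states to incoherent states; IO $\subsetneq$ MIO. *)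

theory Defs
  imports Complex_Main "Jordan_Normal_Form.Matrix"
begin

definition adj :: "complex mat \<Rightarrow> complex mat" where
  "adj A = mat (dim_col A) (dim_row A) (\<lambda>(i,j). cnj (A $$ (j,i)))"

definition mtrace :: "complex mat \<Rightarrow> complex" where
  "mtrace A = (\<Sum>i<dim_row A. A $$ (i,i))"

definition msum :: "nat \<Rightarrow> nat \<Rightarrow> ('i \<Rightarrow> complex mat) \<Rightarrow> 'i set \<Rightarrow> complex mat" where
  "msum r c f I = mat r c (\<lambda>ij. \<Sum>x\<in>I. f x $$ ij)"

definition psd :: "nat \<Rightarrow> complex mat \<Rightarrow> bool" where
  "psd n A \<longleftrightarrow> A \<in> carrier_mat n n \<and>
     (\<forall>v \<in> carrier_vec n. let q = map_vec cnj v \<bullet> (A *\<^sub>v v) in Im q = 0 \<and> 0 \<le> Re q)"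

definition density :: "nat \<Rightarrow> complex mat \<Rightarrow> bool" where
  "density n \<rho> \<longleftrightarrow> psd n \<rho> \<and> mtrace \<rho> = 1"

definition incoherent :: "nat \<Rightarrow> complex mat \<Rightarrow> bool" where
  "incoherent n \<rho> \<longleftrightarrow> density n \<rho> \<and> diagonal_mat \<rho>"

definition ensemble :: "nat \<Rightarrow> nat \<Rightarrow> (nat \<Rightarrow> real) \<Rightarrow> (nat \<Rightarrow> complex mat) \<Rightarrow> bool" where
  "ensemble d k p \<rho> \<longleftrightarrow> (\<forall>j<k. 0 \<le> p j \<and> density d (\<rho> j)) \<and> (\<Sum>j<k. p j) = 1"

definition povm :: "nat \<Rightarrow> nat \<Rightarrow> (nat \<Rightarrow> complex mat) \<Rightarrow> bool" where
  "povm d k E \<longleftrightarrow> (\<forall>j<k. psd d (E j)) \<and> msum d d E {..<k} = 1\<^sub>m d"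

definition Psuc :: "nat \<Rightarrow> nat \<Rightarrow> (nat \<Rightarrow> real) \<Rightarrow> (nat \<Rightarrow> complex mat) \<Rightarrow> real" where
  "Psuc d k p \<rho> = Sup {(\<Sum>j<k. p j * Re (mtrace (E j * \<rho> j))) | E. povm d k E}"

definition is_kraus :: "nat \<Rightarrow> nat \<Rightarrow> nat \<Rightarrow> (nat \<Rightarrow> complex mat) \<Rightarrow> bool" where
  "is_kraus n m N K \<longleftrightarrow> (\<forall>i<N. K i \<in> carrier_mat m n) \<and>
      msum n n (\<lambda>i. adj (K i) * K i) {..<N} = 1\<^sub>m n"

definition kraus_map :: "nat \<Rightarrow> nat \<Rightarrow> (nat \<Rightarrow> complex mat) \<Rightarrow> complex mat \<Rightarrow> complex mat" where
  "kraus_map m N K \<rho> = msum m m (\<lambda>i. K i * \<rho> * adj (K i)) {..<N}"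

definition channel :: "nat \<Rightarrow> nat \<Rightarrow> (complex mat \<Rightarrow> complex mat) \<Rightarrow> bool" where
  "channel n m \<Phi> \<longleftrightarrow> (\<exists>N K. is_kraus n m N K \<and> (\<forall>\<rho> \<in> carrier_mat n n. \<Phi> \<rho> = kraus_map m N K \<rho>))"

definition MIO :: "nat \<Rightarrow> nat \<Rightarrow> (complex mat \<Rightarrow> complex mat) \<Rightarrow> bool" where
  "MIO n m \<Phi> \<longleftrightarrow> channel n m \<Phi> \<and> (\<forall>\<rho>. incoherent n \<rho> \<longrightarrow> incoherent m (\<Phi> \<rho>))"

definition IO :: "nat \<Rightarrow> nat \<Rightarrow> (complex mat \<Rightarrow> complex mat) \<Rightarrow> bool" where
  "IO n m \<Phi> \<longleftrightarrow> (\<exists>N K. is_kraus n m N K \<and> (\<forall>\<rho> \<in> carrier_mat n n. \<Phi> \<rho> = kraus_map m N K \<rho>) \<and>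
      (\<forall>i<N. \<forall>\<rho>. incoherent n \<rho> \<longrightarrow> diagonal_mat (K i * \<rho> * adj (K i))))"

text \<open>Output system B (dim k) tensor A' (dim d); basis vector |j>|a> has index j*d + a.
  projB d k j is the projector |j><j|_B tensor I_{A'}.\<close>
definition projB :: "nat \<Rightarrow> nat \<Rightarrow> nat \<Rightarrow> complex mat" where
  "projB d k j = mat (k*d) (k*d) (\<lambda>(r,c). if r = c \<and> r div d = j then 1 else 0)"

definition Ptilde ::
  "(nat \<Rightarrow> nat \<Rightarrow> (complex mat \<Rightarrow> complex mat) \<Rightarrow> bool) \<Rightarrow>
   nat \<Rightarrow> nat \<Rightarrow> (nat \<Rightarrow> real) \<Rightarrow> (nat \<Rightarrow> complex mat) \<Rightarrow> real" where
  "Ptilde Free d k p \<rho> = Sup {(\<Sum>j<k. p j * Re (mtrace (\<Phi> (\<rho> j) * projB d k j))) | \<Phi>. Free d (k*d) \<Phi>}"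

end

theory Submission
  imports Defs
begin

text \<open>Measuring the register B after a channel with Kraus operators K_i is the same as
  measuring its input with the POVM E_j = \<Sum>_i K_i^* (|j><j| \<otimes> I) K_i, so no channel, free
  or not, beats the optimal POVM. Conversely, factor each effect as a Gram matrix
  E_j = \<Sum>_r v_jr v_jr^* (a Cholesky factorisation, obtained by peeling off one Schur
  complement at a time). The rank-one Kraus operators |j,r><v_jr| form a channel that maps
  every input to a diagonal matrix, hence an incoherent operation, and measuring B on its
  output gives outcome j with probability \<Sum>_r <v_jr|\<rho>|v_jr> = tr (E_j \<rho>). So POVMs, IO and
  MIO achieve exactly the same success probabilities, and in particular the same supremum.\<close>

section \<open>Quadratic forms and positive semidefiniteness\<close>

text \<open>Positive semidefiniteness is restated for entry functions rather than matrices, which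
  keeps the Cholesky induction free of carrier side conditions.\<close>

definition quad_form :: "nat \<Rightarrow> (nat \<Rightarrow> nat \<Rightarrow> complex) \<Rightarrow> (nat \<Rightarrow> complex) \<Rightarrow> complex" where
  "quad_form n A v = (\<Sum>a<n. \<Sum>b<n. cnj (v a) * A a b * v b)"

definition psd_form :: "nat \<Rightarrow> (nat \<Rightarrow> nat \<Rightarrow> complex) \<Rightarrow> bool" where
  "psd_form n A \<longleftrightarrow> (\<forall>v. Im (quad_form n A v) = 0 \<and> 0 \<le> Re (quad_form n A v))"

lemma quad_form_cong: "(\<And>i. i < n \<Longrightarrow> v i = w i) \<Longrightarrow> quad_form n A v = quad_form n A w"
  unfolding quad_form_def by simp

lemma quad_form_vec:
  assumes "A \<in> carrier_mat n n" "v \<in> carrier_vec n"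
  shows "map_vec cnj v \<bullet> (A *\<^sub>v v) = quad_form n (\<lambda>a b. A $$ (a,b)) (\<lambda>i. v $ i)"
  using assms unfolding quad_form_def
  by (auto simp: mult_mat_vec_def scalar_prod_def sum_distrib_left mult.assoc intro!: sum.cong)

lemma psd_iff_psd_form: "psd n A \<longleftrightarrow> A \<in> carrier_mat n n \<and> psd_form n (\<lambda>a b. A $$ (a,b))"
proof (cases "A \<in> carrier_mat n n")
  case A: True
  define nonneg :: "complex \<Rightarrow> bool" where "nonneg q \<longleftrightarrow> Im q = 0 \<and> 0 \<le> Re q" for q
  have "(\<forall>v \<in> carrier_vec n. nonneg (map_vec cnj v \<bullet> (A *\<^sub>v v))) \<longleftrightarrow>
        (\<forall>v. nonneg (quad_form n (\<lambda>a b. A $$ (a,b)) v))"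
  proof
    assume nn: "\<forall>v \<in> carrier_vec n. nonneg (map_vec cnj v \<bullet> (A *\<^sub>v v))"
    show "\<forall>v. nonneg (quad_form n (\<lambda>a b. A $$ (a,b)) v)"
    proof
      fix v
      have "quad_form n (\<lambda>a b. A $$ (a,b)) v = quad_form n (\<lambda>a b. A $$ (a,b)) (\<lambda>i. vec n v $ i)"
        by (rule quad_form_cong) simp
      also have "\<dots> = map_vec cnj (vec n v) \<bullet> (A *\<^sub>v vec n v)"
        using A by (simp add: quad_form_vec)
      finally show "nonneg (quad_form n (\<lambda>a b. A $$ (a,b)) v)" using nn by simp
    qed
  qed (simp add: quad_form_vec[OF A])
  then show ?thesis unfolding psd_def psd_form_def Let_def nonneg_def using A by simp
qed (simp add: psd_def)

lemma psd_form_cong: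
  assumes "\<And>a b. a < n \<Longrightarrow> b < n \<Longrightarrow> A a b = B a b"
  shows "psd_form n A \<longleftrightarrow> psd_form n B"
proof -
  have "quad_form n A = quad_form n B"
    using assms unfolding quad_form_def by (intro ext sum.cong) auto
  then show ?thesis unfolding psd_form_def by simp
qed

lemma quad_form_supported:
  assumes "S \<subseteq> {..<n}" "\<And>x. x \<notin> S \<Longrightarrow> v x = 0"
  shows "quad_form n A v = (\<Sum>a\<in>S. \<Sum>b\<in>S. cnj (v a) * A a b * v b)"
proof -
  have fS: "finite S" using assms(1) finite_subset by blast
  have "quad_form n A v = (\<Sum>a\<in>S. \<Sum>b<n. cnj (v a) * A a b * v b)"
    unfolding quad_form_def by (rule sum.mono_neutral_right) (auto simp: assms)
  also have "\<dots> = (\<Sum>a\<in>S. \<Sum>b\<in>S. cnj (v a) * A a b * v b)"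
    by (intro sum.cong refl sum.mono_neutral_right) (auto simp: assms fS)
  finally show ?thesis .
qed

lemma quad_form_single:
  "a < n \<Longrightarrow> quad_form n A (\<lambda>x. if x = a then \<alpha> else 0) = cnj \<alpha> * A a a * \<alpha>"
  by (subst quad_form_supported[where S="{a}"]) auto

lemma quad_form_pair:
  assumes "a < n" "b < n" "a \<noteq> b"
  shows "quad_form n A (\<lambda>x. (if x = a then \<alpha> else 0) + (if x = b then \<beta> else 0)) =
     cnj \<alpha> * A a a * \<alpha> + cnj \<alpha> * A a b * \<beta> + cnj \<beta> * A b a * \<alpha> + cnj \<beta> * A b b * \<beta>"
  using assms by (subst quad_form_supported[where S="{a,b}"]) auto

lemma quad_form_add:
  "quad_form n A (\<lambda>x. v x + w x) = quad_form n A v + (\<Sum>a<n. \<Sum>b<n. cnj (v a) * A a b * w b)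
     + (\<Sum>a<n. \<Sum>b<n. cnj (w a) * A a b * v b) + quad_form n A w"
  by (simp add: quad_form_def algebra_simps sum.distrib)

lemma quad_form_add_single:
  assumes "t < n"
  shows "quad_form n A (\<lambda>x. v x + (if x = t then \<mu> else 0)) =
    quad_form n A v + (\<Sum>a<n. cnj (v a) * A a t) * \<mu> + cnj \<mu> * (\<Sum>b<n. A t b * v b) + cnj \<mu> * A t t * \<mu>"
proof -
  have [simp]: "x * (if P then y else 0) = (if P then x * y else 0)"
    "(if P then y else 0) * x = (if P then y * x else 0)"
    "cnj (if P then y else 0) = (if P then cnj y else 0)"
    "(\<Sum>b<n. if P then f b else 0) = (if P then sum f {..<n} else 0)"
    for P and x y :: complex and f :: "nat \<Rightarrow> complex"
    by simp_all
  show ?thesis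
    unfolding quad_form_add using assms
    by (simp add: quad_form_single sum_distrib_left sum_distrib_right mult.assoc cong: if_cong)
qed

lemma quad_form_sum: "quad_form n (\<lambda>a b. \<Sum>i\<in>I. A i a b) v = (\<Sum>i\<in>I. quad_form n (A i) v)"
proof -
  have "quad_form n (\<lambda>a b. \<Sum>i\<in>I. A i a b) v = (\<Sum>a<n. \<Sum>b<n. \<Sum>i\<in>I. cnj (v a) * A i a b * v b)"
    by (simp add: quad_form_def sum_distrib_left sum_distrib_right)
  also have "\<dots> = (\<Sum>a<n. \<Sum>i\<in>I. \<Sum>b<n. cnj (v a) * A i a b * v b)"
    by (rule sum.cong[OF refl], rule sum.swap)
  also have "\<dots> = (\<Sum>i\<in>I. quad_form n (A i) v)"
    unfolding quad_form_def by (rule sum.swap)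
  finally show ?thesis .
qed

lemma psd_form_sum:
  assumes "\<And>i. i \<in> I \<Longrightarrow> psd_form n (A i)"
  shows "psd_form n (\<lambda>a b. \<Sum>i\<in>I. A i a b)"
  using assms unfolding psd_form_def quad_form_sum by (simp add: sum_nonneg)

lemma psd_form_gram:
  assumes "finite X"
  shows "psd_form n (\<lambda>a b. \<Sum>x\<in>X. cnj (f x a) * f x b)"
proof -
  have "quad_form n (\<lambda>a b. \<Sum>x\<in>X. cnj (f x a) * f x b) v
      = of_real (\<Sum>x\<in>X. (cmod (\<Sum>b<n. f x b * v b))\<^sup>2)" for v
  proof -
    have "quad_form n (\<lambda>a b. \<Sum>x\<in>X. cnj (f x a) * f x b) v
        = (\<Sum>a<n. \<Sum>b<n. \<Sum>x\<in>X. cnj (f x a * v a) * (f x b * v b))"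
      by (simp add: quad_form_def sum_distrib_left sum_distrib_right mult_ac)
    also have "\<dots> = (\<Sum>a<n. \<Sum>x\<in>X. \<Sum>b<n. cnj (f x a * v a) * (f x b * v b))"
      by (rule sum.cong[OF refl], rule sum.swap)
    also have "\<dots> = (\<Sum>x\<in>X. \<Sum>a<n. \<Sum>b<n. cnj (f x a * v a) * (f x b * v b))"
      by (rule sum.swap)
    also have "\<dots> = (\<Sum>x\<in>X. cnj (\<Sum>a<n. f x a * v a) * (\<Sum>b<n. f x b * v b))"
      by (simp add: sum_product)
    also have "\<dots> = of_real (\<Sum>x\<in>X. (cmod (\<Sum>b<n. f x b * v b))\<^sup>2)"
      unfolding of_real_sum complex_norm_square by (simp add: mult.commute del: cnj_sum)
    finally show ?thesis .
  qed
  then show ?thesis unfolding psd_form_def by (simp add: sum_nonneg)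
qed

lemma psd_form_diag:
  assumes "psd_form n A" "a < n"
  shows "Im (A a a) = 0" "0 \<le> Re (A a a)"
  using assms quad_form_single[OF assms(2), of A 1] unfolding psd_form_def
  by (metis mult_1 mult_1_right complex_cnj_one)+

lemma psd_form_hermitian:
  assumes "psd_form n A" "a < n" "b < n"
  shows "A b a = cnj (A a b)"
proof (cases "a = b")
  case True
  then show ?thesis using psd_form_diag[OF assms(1,2)] by (simp add: complex_eq_iff)
next
  case False
  have diag: "Im (A a a) = 0" "Im (A b b) = 0" using psd_form_diag assms by auto
  have "Im (quad_form n A (\<lambda>x. (if x = a then 1 else 0) + (if x = b then 1 else 0))) = 0"
    using assms(1) unfolding psd_form_def by blast
  then have "Im (A a b) + Im (A b a) = 0" using diag by (simp add: quad_form_pair[OF assms(2,3) False])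
  moreover have "Im (quad_form n A (\<lambda>x. (if x = a then 1 else 0) + (if x = b then \<i> else 0))) = 0"
    using assms(1) unfolding psd_form_def by blast
  then have "Re (A a b) - Re (A b a) = 0" using diag by (simp add: quad_form_pair[OF assms(2,3) False])
  ultimately show ?thesis by (simp add: complex_eq_iff)
qed

text \<open>Otherwise the form is negative at a suitable combination of the basis vectors t and b.\<close>
lemma psd_form_zero_row:
  assumes "psd_form n A" "t < n" "A t t = 0" "b < n"
  shows "A t b = 0"
proof (rule ccontr)
  assume nz: "A t b \<noteq> 0"
  then have tb: "t \<noteq> b" using assms by auto
  define z where "z = A t b"
  have bt: "A b t = cnj z" using psd_form_hermitian[OF assms(1,2,4)] z_def by simp
  have bb: "Im (A b b) = 0" using psd_form_diag assms by auto
  define s :: real where "s = (Re (A b b) + 1) / (2 * (cmod z)\<^sup>2)"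
  have zpos: "(cmod z)\<^sup>2 > 0" using nz z_def by simp
  have "0 \<le> Re (quad_form n A (\<lambda>x. (if x = t then - (of_real s * z) else 0) + (if x = b then 1 else 0)))"
    using assms(1) unfolding psd_form_def by blast
  also have "\<dots> = - 2 * s * (cmod z)\<^sup>2 + Re (A b b)"
    unfolding quad_form_pair[OF assms(2,4) tb] assms(3) bt
    by (simp add: cmod_def power2_eq_square algebra_simps flip: z_def)
  also have "\<dots> = -1" using zpos unfolding s_def by (simp add: field_simps)
  finally show False by simp
qed

lemma psd_form_SucD: "psd_form (Suc n) A \<Longrightarrow> psd_form n A"
proof (unfold psd_form_def, intro allI)
  fix v
  assume psd: "\<forall>v. Im (quad_form (Suc n) A v) = 0 \<and> 0 \<le> Re (quad_form (Suc n) A v)"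
  have "quad_form (Suc n) A (\<lambda>x. if x < n then v x else 0) = quad_form n A v"
    by (subst quad_form_supported[where S="{..<n}"]) (auto simp: quad_form_def)
  then show "Im (quad_form n A v) = 0 \<and> 0 \<le> Re (quad_form n A v)" using psd by metis
qed

text \<open>If E t t = 0 the division yields 0, and the claim is trivial.\<close>
lemma psd_form_schur_complement:
  assumes psd: "psd_form n E" and t: "t < n"
  shows "psd_form n (\<lambda>a b. E a b - E a t * E t b / E t t)"
proof (cases "E t t = 0")
  case True
  then show ?thesis using psd by simp
next
  case False
  have real: "cnj (E t t) = E t t"
    using psd_form_diag(1)[OF psd t] by (simp add: complex_eq_iff)
  show ?thesis
    unfolding psd_form_def
  proof
    fix v
    define S where "S = (\<Sum>b<n. E t b * v b)"
    have col: "(\<Sum>a<n. cnj (v a) * E a t) = cnj S"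
      unfolding S_def cnj_sum by (rule sum.cong) (auto simp: psd_form_hermitian[OF psd t])
    have "quad_form n (\<lambda>a b. E a b - E a t * E t b / E t t) v
        = quad_form n E v - (\<Sum>a<n. cnj (v a) * E a t) * (\<Sum>b<n. E t b * v b) / E t t"
      by (simp add: quad_form_def sum_subtractf sum_product sum_divide_distrib algebra_simps) (rule sum.swap)
    also have "\<dots> = quad_form n E (\<lambda>x. v x + (if x = t then - S / E t t else 0))"
      unfolding quad_form_add_single[OF t] col S_def[symmetric] using False real
      by (simp add: field_simps)
    finally show "Im (quad_form n (\<lambda>a b. E a b - E a t * E t b / E t t) v) = 0 \<and>
        0 \<le> Re (quad_form n (\<lambda>a b. E a b - E a t * E t b / E t t) v)"
      using psd unfolding psd_form_def by simp
  qed
qed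

lemma psd_form_rank_one_factor:
  assumes psd: "psd_form n E" and "t < n" "a < n"
  defines "u \<equiv> \<lambda>b. E t b / of_real (sqrt (Re (E t t)))"
  shows "cnj (u a) * u b = E a t * E t b / E t t"
proof -
  have "Im (E t t) = 0" "0 \<le> Re (E t t)" using psd_form_diag[OF assms(1,2)] by auto
  then have "E t t = (of_real (sqrt (Re (E t t))))\<^sup>2"
    by (simp add: complex_eq_iff flip: of_real_power)
  moreover have "cnj (E t a) = E a t" using psd_form_hermitian[OF assms(1-3)] by simp
  ultimately show ?thesis unfolding u_def by (simp add: power2_eq_square)
qed

lemma psd_form_pivot_cancel:
  assumes psd: "psd_form n E" and t: "t < n" and "b < n"
  shows "E t b * E t t / E t t = E t b" "E b t * E t t / E t t = E b t"
proof -
  have "E t b = 0 \<and> E b t = 0" if "E t t = 0"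
    using psd_form_zero_row[OF psd t that assms(3)] psd_form_hermitian[OF psd t assms(3)] by simp
  then show "E t b * E t t / E t t = E t b" "E b t * E t t / E t t = E b t"
    by (cases "E t t = 0"; simp)+
qed

text \<open>Cholesky factorisation, by induction on the size: the Schur complement of the last
  diagonal entry vanishes on the last row and column, and its leading block is factored by
  the induction hypothesis.\<close>
lemma psd_form_gram_decomposition:
  "psd_form n E \<Longrightarrow> \<exists>w. \<forall>a<n. \<forall>b<n. E a b = (\<Sum>r<n. cnj (w r a) * w r b)"
proof (induction n arbitrary: E)
  case 0
  then show ?case by simp
next
  case (Suc n)
  define u where "u b = E n b / of_real (sqrt (Re (E n n)))" for b
  have schur: "psd_form n (\<lambda>a b. E a b - E a n * E n b / E n n)"
    using psd_form_SucD[OF psd_form_schur_complement[OF Suc.prems]] by simp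
  obtain w where w: "\<And>a b. a < n \<Longrightarrow> b < n \<Longrightarrow> E a b - E a n * E n b / E n n = (\<Sum>r<n. cnj (w r a) * w r b)"
    using Suc.IH[OF schur] by blast
  define w' where "w' r a = (if r = n then u a else if a < n then w r a else 0)" for r a
  have "E a b = (\<Sum>r<Suc n. cnj (w' r a) * w' r b)" if ab: "a < Suc n" "b < Suc n" for a b
  proof -
    have "(\<Sum>r<Suc n. cnj (w' r a) * w' r b) = (\<Sum>r<n. cnj (w' r a) * w' r b) + E a n * E n b / E n n"
      using psd_form_rank_one_factor[OF Suc.prems _ ab(1), of n b] by (simp add: w'_def u_def)
    moreover have "E a b = E a n * E n b / E n n" if "a = n \<or> b = n"
      using that psd_form_pivot_cancel[OF Suc.prems] ab by (auto simp: mult.commute)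
    ultimately show ?thesis
      using w[of a b] ab by (cases "a = n \<or> b = n") (auto simp: w'_def diff_eq_eq)
  qed
  then show ?case by blast
qed

lemma psd_gram_decomposition:
  assumes "psd n E"
  obtains w where "\<And>a b. a < n \<Longrightarrow> b < n \<Longrightarrow> E $$ (a,b) = (\<Sum>r<n. cnj (w r a) * w r b)"
  using psd_form_gram_decomposition assms unfolding psd_iff_psd_form by blast

lemma msum_index [simp]: "i < r \<Longrightarrow> j < c \<Longrightarrow> msum r c f I $$ (i,j) = (\<Sum>x\<in>I. f x $$ (i,j))"
  unfolding msum_def by simp

lemma msum_dim [simp]: "dim_row (msum r c f I) = r" "dim_col (msum r c f I) = c"
  unfolding msum_def by simp_all

lemma msum_carrier [simp]: "msum r c f I \<in> carrier_mat r c"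
  unfolding msum_def by simp

lemma adj_index [simp]: "i < dim_col A \<Longrightarrow> j < dim_row A \<Longrightarrow> adj A $$ (i,j) = cnj (A $$ (j,i))"
  unfolding adj_def by simp

lemma adj_dim [simp]: "dim_row (adj A) = dim_col A" "dim_col (adj A) = dim_row A"
  unfolding adj_def by simp_all

lemma adj_carrier: "A \<in> carrier_mat m n \<Longrightarrow> adj A \<in> carrier_mat n m"
  by auto

lemma kraus_map_carrier [simp]: "kraus_map m N K \<rho> \<in> carrier_mat m m"
  unfolding kraus_map_def by simp

lemma kraus_map_dim [simp]: "dim_row (kraus_map m N K \<rho>) = m" "dim_col (kraus_map m N K \<rho>) = m"
  unfolding kraus_map_def by simp_all

lemma projB_index [simp]:
  "r < k*d \<Longrightarrow> c < k*d \<Longrightarrow> projB d k j $$ (r,c) = (if r = c \<and> r div d = j then 1 else 0)"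
  unfolding projB_def by simp

lemma projB_carrier [simp]: "projB d k j \<in> carrier_mat (k*d) (k*d)"
  unfolding projB_def by simp

lemma mult_index:
  assumes "A \<in> carrier_mat n m" "B \<in> carrier_mat m l" "i < n" "j < l"
  shows "(A * B) $$ (i,j) = (\<Sum>s<m. A $$ (i,s) * B $$ (s,j))"
  using assms by (simp add: scalar_prod_def atLeast0LessThan)

lemma adj_mult_index:
  assumes "A \<in> carrier_mat m n" "B \<in> carrier_mat m l" "a < n" "b < l"
  shows "(adj A * B) $$ (a,b) = (\<Sum>s<m. cnj (A $$ (s,a)) * B $$ (s,b))"
  using assms by (simp add: scalar_prod_def atLeast0LessThan)

lemma sandwich_index:
  assumes "A \<in> carrier_mat m n" "\<rho> \<in> carrier_mat n n" "s < m" "t < m"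
  shows "(A * \<rho> * adj A) $$ (s,t) = (\<Sum>a<n. \<Sum>b<n. A $$ (s,a) * \<rho> $$ (a,b) * cnj (A $$ (t,b)))"
proof -
  have "(A * \<rho> * adj A) $$ (s,t) = (\<Sum>b<n. (\<Sum>a<n. A $$ (s,a) * \<rho> $$ (a,b)) * cnj (A $$ (t,b)))"
    using assms by (simp add: scalar_prod_def atLeast0LessThan)
  also have "\<dots> = (\<Sum>b<n. \<Sum>a<n. A $$ (s,a) * \<rho> $$ (a,b) * cnj (A $$ (t,b)))"
    by (simp add: sum_distrib_right)
  also have "\<dots> = (\<Sum>a<n. \<Sum>b<n. A $$ (s,a) * \<rho> $$ (a,b) * cnj (A $$ (t,b)))"
    by (rule sum.swap)
  finally show ?thesis .
qed

lemma adj_scalar_prod: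
  assumes "A \<in> carrier_mat m n" "v \<in> carrier_vec m" "x \<in> carrier_vec n"
  shows "map_vec cnj v \<bullet> (A *\<^sub>v x) = map_vec cnj (adj A *\<^sub>v v) \<bullet> x"
proof -
  have "map_vec cnj v \<bullet> (A *\<^sub>v x) = (\<Sum>s<m. \<Sum>a<n. cnj (v $ s) * A $$ (s,a) * x $ a)"
    using assms by (simp add: scalar_prod_def atLeast0LessThan sum_distrib_left mult.assoc)
  also have "\<dots> = (\<Sum>a<n. \<Sum>s<m. cnj (v $ s) * A $$ (s,a) * x $ a)"
    by (rule sum.swap)
  also have "\<dots> = map_vec cnj (adj A *\<^sub>v v) \<bullet> x"
    using assms by (simp add: scalar_prod_def atLeast0LessThan sum_distrib_left sum_distrib_right mult_ac)
  finally show ?thesis .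
qed

lemma is_kraus_iff:
  "is_kraus n m N K \<longleftrightarrow> (\<forall>i<N. K i \<in> carrier_mat m n) \<and>
     (\<forall>a<n. \<forall>b<n. (\<Sum>i<N. \<Sum>s<m. cnj (K i $$ (s,a)) * K i $$ (s,b)) = (if a = b then 1 else 0))"
proof (cases "\<forall>i<N. K i \<in> carrier_mat m n")
  case True
  then have "msum n n (\<lambda>i. adj (K i) * K i) {..<N} $$ (a,b) =
      (\<Sum>i<N. \<Sum>s<m. cnj (K i $$ (s,a)) * K i $$ (s,b))" if "a < n" "b < n" for a b
    using that True by (auto intro!: sum.cong simp: adj_mult_index[of _ m n _ n])
  then show ?thesis using True unfolding is_kraus_def mat_eq_iff by auto
qed (auto simp: is_kraus_def)

lemma povm_iff:
  "povm d k E \<longleftrightarrow> (\<forall>j<k. psd d (E j)) \<and>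
     (\<forall>a<d. \<forall>b<d. (\<Sum>j<k. E j $$ (a,b)) = (if a = b then 1 else 0))"
  unfolding povm_def mat_eq_iff by auto

section \<open>Traces and Kraus maps\<close>

lemma mtrace_mult:
  assumes "A \<in> carrier_mat n m" "B \<in> carrier_mat m n"
  shows "mtrace (A * B) = (\<Sum>a<n. \<Sum>b<m. A $$ (a,b) * B $$ (b,a))"
  using assms unfolding mtrace_def by (simp add: scalar_prod_def atLeast0LessThan)

lemma mtrace_mult_commute:
  assumes "A \<in> carrier_mat n m" "B \<in> carrier_mat m n"
  shows "mtrace (A * B) = mtrace (B * A)"
  unfolding mtrace_mult[OF assms] mtrace_mult[OF assms(2,1)]
  by (subst sum.swap) (simp add: mult.commute)

lemma mtrace_msum:
  assumes "\<And>i. i \<in> I \<Longrightarrow> f i \<in> carrier_mat n n"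
  shows "mtrace (msum n n f I) = (\<Sum>i\<in>I. mtrace (f i))"
proof -
  have "mtrace (msum n n f I) = (\<Sum>a<n. \<Sum>i\<in>I. f i $$ (a,a))"
    by (simp add: mtrace_def)
  also have "\<dots> = (\<Sum>i\<in>I. \<Sum>a<n. f i $$ (a,a))"
    by (rule sum.swap)
  also have "\<dots> = (\<Sum>i\<in>I. mtrace (f i))"
    using assms by (auto simp: mtrace_def intro!: sum.cong)
  finally show ?thesis .
qed

lemma msum_mult:
  assumes "\<And>i. i \<in> I \<Longrightarrow> f i \<in> carrier_mat n m" "B \<in> carrier_mat m l"
  shows "msum n m f I * B = msum n l (\<lambda>i. f i * B) I"
proof (rule eq_matI)
  fix a b assume "a < dim_row (msum n l (\<lambda>i. f i * B) I)" "b < dim_col (msum n l (\<lambda>i. f i * B) I)"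
  then have ab: "a < n" "b < l" by simp_all
  have "(msum n m f I * B) $$ (a,b) = (\<Sum>c<m. (\<Sum>i\<in>I. f i $$ (a,c)) * B $$ (c,b))"
    using ab assms(2) by (simp add: scalar_prod_def atLeast0LessThan)
  also have "\<dots> = (\<Sum>i\<in>I. \<Sum>c<m. f i $$ (a,c) * B $$ (c,b))"
    unfolding sum_distrib_right by (rule sum.swap)
  also have "\<dots> = (\<Sum>i\<in>I. (f i * B) $$ (a,b))"
  proof (rule sum.cong[OF refl])
    fix i assume "i \<in> I"
    then have "f i \<in> carrier_mat n m" by (rule assms(1))
    then show "(\<Sum>c<m. f i $$ (a,c) * B $$ (c,b)) = (f i * B) $$ (a,b)"
      using ab assms(2) by (simp add: scalar_prod_def atLeast0LessThan)
  qed
  also have "\<dots> = msum n l (\<lambda>i. f i * B) I $$ (a,b)"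
    using ab by simp
  finally show "(msum n m f I * B) $$ (a,b) = msum n l (\<lambda>i. f i * B) I $$ (a,b)" .
qed (use assms in auto)

text \<open>The Heisenberg picture: the right-hand side applies the dual channel to B.\<close>
lemma mtrace_kraus_map_mult:
  assumes K: "\<And>i. i < N \<Longrightarrow> K i \<in> carrier_mat m n"
    and \<rho>: "\<rho> \<in> carrier_mat n n" and B: "B \<in> carrier_mat m m"
  shows "mtrace (kraus_map m N K \<rho> * B) = mtrace (msum n n (\<lambda>i. adj (K i) * B * K i) {..<N} * \<rho>)"
proof -
  have KK: "K i * \<rho> * adj (K i) \<in> carrier_mat m m" "K i * \<rho> * adj (K i) * B \<in> carrier_mat m m"
    "adj (K i) * B * K i \<in> carrier_mat n n" "adj (K i) * B * K i * \<rho> \<in> carrier_mat n n"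
    if "i < N" for i
    using K[OF that] adj_carrier[OF K[OF that]] \<rho> B by (auto intro!: mult_carrier_mat)
  have cyclic: "mtrace (K i * \<rho> * adj (K i) * B) = mtrace (adj (K i) * B * K i * \<rho>)" if i: "i < N" for i
  proof -
    have Ki: "K i \<in> carrier_mat m n" "adj (K i) \<in> carrier_mat n m" using K[OF i] by auto
    have KR: "K i * \<rho> \<in> carrier_mat m n" "adj (K i) * B \<in> carrier_mat n m"
      using Ki \<rho> B by (auto intro!: mult_carrier_mat)
    have "K i * \<rho> * adj (K i) * B = (K i * \<rho>) * (adj (K i) * B)"
      by (rule assoc_mult_mat[OF KR(1) Ki(2) B])
    moreover have "adj (K i) * B * K i * \<rho> = (adj (K i) * B) * (K i * \<rho>)"
      by (rule assoc_mult_mat[OF KR(2) Ki(1) \<rho>])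
    moreover have "mtrace ((K i * \<rho>) * (adj (K i) * B)) = mtrace ((adj (K i) * B) * (K i * \<rho>))"
      by (rule mtrace_mult_commute[OF KR])
    ultimately show ?thesis by simp
  qed
  have "mtrace (kraus_map m N K \<rho> * B) = mtrace (msum m m (\<lambda>i. K i * \<rho> * adj (K i) * B) {..<N})"
    unfolding kraus_map_def using KK B by (subst msum_mult) auto
  also have "\<dots> = (\<Sum>i<N. mtrace (K i * \<rho> * adj (K i) * B))"
    using KK B by (intro mtrace_msum) auto
  also have "\<dots> = (\<Sum>i<N. mtrace (adj (K i) * B * K i * \<rho>))"
    using cyclic by simp
  also have "\<dots> = mtrace (msum n n (\<lambda>i. adj (K i) * B * K i * \<rho>) {..<N})"
    using KK \<rho> by (intro mtrace_msum[symmetric]) auto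
  also have "\<dots> = mtrace (msum n n (\<lambda>i. adj (K i) * B * K i) {..<N} * \<rho>)"
    using KK \<rho> by (subst msum_mult) auto
  finally show ?thesis .
qed

lemma mtrace_kraus_map:
  assumes "is_kraus n m N K" "\<rho> \<in> carrier_mat n n"
  shows "mtrace (kraus_map m N K \<rho>) = mtrace \<rho>"
proof -
  have K: "\<And>i. i < N \<Longrightarrow> K i \<in> carrier_mat m n"
    and complete: "msum n n (\<lambda>i. adj (K i) * K i) {..<N} = 1\<^sub>m n"
    using assms(1) unfolding is_kraus_def by auto
  have "adj (K i) * 1\<^sub>m m * K i = adj (K i) * K i" if "i < N" for i
    using adj_carrier[OF K[OF that]] by (simp add: right_mult_one_mat)
  then have "msum n n (\<lambda>i. adj (K i) * 1\<^sub>m m * K i) {..<N} = msum n n (\<lambda>i. adj (K i) * K i) {..<N}"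
    unfolding msum_def by simp
  then have dual_one: "msum n n (\<lambda>i. adj (K i) * 1\<^sub>m m * K i) {..<N} = 1\<^sub>m n"
    using complete by simp
  have "mtrace (kraus_map m N K \<rho>) = mtrace (kraus_map m N K \<rho> * 1\<^sub>m m)"
    by (simp add: right_mult_one_mat[OF kraus_map_carrier])
  also have "\<dots> = mtrace \<rho>"
    using mtrace_kraus_map_mult[OF K assms(2) one_carrier_mat] assms(2) by (simp add: dual_one)
  finally show ?thesis .
qed

lemma psd_sandwich:
  assumes A: "A \<in> carrier_mat m n" and \<rho>: "psd n \<rho>"
  shows "psd m (A * \<rho> * adj A)"
proof -
  have \<rho>n: "\<rho> \<in> carrier_mat n n" using \<rho> unfolding psd_def by blast
  have adj_v: "adj A *\<^sub>v v \<in> carrier_vec n" if "v \<in> carrier_vec m" for v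
    using adj_carrier[OF A] that by (rule mult_mat_vec_carrier)
  have "map_vec cnj v \<bullet> ((A * \<rho> * adj A) *\<^sub>v v) = map_vec cnj (adj A *\<^sub>v v) \<bullet> (\<rho> *\<^sub>v (adj A *\<^sub>v v))"
    if v: "v \<in> carrier_vec m" for v
  proof -
    have "(A * \<rho> * adj A) *\<^sub>v v = (A * \<rho>) *\<^sub>v (adj A *\<^sub>v v)"
      using A \<rho>n v by (intro assoc_mult_mat_vec[of _ m n _ m]) auto
    also have "\<dots> = A *\<^sub>v (\<rho> *\<^sub>v (adj A *\<^sub>v v))"
      using A \<rho>n adj_v[OF v] by (intro assoc_mult_mat_vec[of _ m n _ n]) auto
    finally show ?thesis
      using A \<rho>n v adj_v[OF v] by (simp add: adj_scalar_prod)
  qed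
  moreover have "A * \<rho> * adj A \<in> carrier_mat m m"
    using A \<rho>n adj_carrier[OF A] by (meson mult_carrier_mat)
  ultimately show ?thesis
    using \<rho> adj_v unfolding psd_def Let_def by simp
qed

lemma psd_msum:
  assumes "\<And>i. i \<in> I \<Longrightarrow> psd n (f i)"
  shows "psd n (msum n n f I)"
proof -
  have "psd_form n (\<lambda>a b. \<Sum>i\<in>I. f i $$ (a,b))"
    using assms by (intro psd_form_sum) (simp add: psd_iff_psd_form)
  moreover have "psd_form n (\<lambda>a b. msum n n f I $$ (a,b)) \<longleftrightarrow> psd_form n (\<lambda>a b. \<Sum>i\<in>I. f i $$ (a,b))"
    by (rule psd_form_cong) simp
  ultimately show ?thesis
    unfolding psd_iff_psd_form by simp
qed

lemma density_kraus_map: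
  assumes "is_kraus n m N K" "density n \<rho>"
  shows "density m (kraus_map m N K \<rho>)"
proof -
  have K: "\<And>i. i < N \<Longrightarrow> K i \<in> carrier_mat m n" using assms(1) unfolding is_kraus_def by auto
  have "psd m (kraus_map m N K \<rho>)"
    using assms(2) unfolding kraus_map_def density_def by (auto intro!: psd_msum psd_sandwich K)
  moreover have "mtrace (kraus_map m N K \<rho>) = 1"
    using assms mtrace_kraus_map unfolding density_def psd_def by metis
  ultimately show ?thesis unfolding density_def by blast
qed

lemma IO_imp_MIO:
  assumes "IO n m \<Phi>"
  shows "MIO n m \<Phi>"
proof -
  obtain N K where kraus: "is_kraus n m N K"
    and \<Phi>: "\<forall>\<rho> \<in> carrier_mat n n. \<Phi> \<rho> = kraus_map m N K \<rho>"
    and diag: "\<And>i \<rho>. i < N \<Longrightarrow> incoherent n \<rho> \<Longrightarrow> diagonal_mat (K i * \<rho> * adj (K i))"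
    using assms unfolding IO_def by blast
  have K: "\<And>i. i < N \<Longrightarrow> K i \<in> carrier_mat m n" using kraus unfolding is_kraus_def by auto
  have "incoherent m (\<Phi> \<rho>)" if inc: "incoherent n \<rho>" for \<rho>
  proof -
    have \<rho>: "\<rho> \<in> carrier_mat n n" "density n \<rho>"
      using inc unfolding incoherent_def density_def psd_def by auto
    have "kraus_map m N K \<rho> $$ (s,t) = 0" if st: "s < m" "t < m" "s \<noteq> t" for s t
    proof -
      have "(K i * \<rho> * adj (K i)) $$ (s,t) = 0" if i: "i < N" for i
      proof -
        have "dim_row (K i * \<rho> * adj (K i)) = m" "dim_col (K i * \<rho> * adj (K i)) = m"
          using K[OF i] by auto
        with diag[OF i inc] have "\<forall>a<m. \<forall>b<m. a \<noteq> b \<longrightarrow> (K i * \<rho> * adj (K i)) $$ (a,b) = 0"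
          unfolding diagonal_mat_def by metis
        then show ?thesis using st by blast
      qed
      then show ?thesis using st unfolding kraus_map_def by simp
    qed
    then have "diagonal_mat (kraus_map m N K \<rho>)" unfolding diagonal_mat_def by simp
    then show ?thesis
      using density_kraus_map[OF kraus \<rho>(2)] \<Phi> \<rho>(1) unfolding incoherent_def by simp
  qed
  moreover have "channel n m \<Phi>" using kraus \<Phi> unfolding channel_def by blast
  ultimately show ?thesis unfolding MIO_def by blast
qed

section \<open>Measuring the output of a channel\<close>

lemma adj_mult_projB_mult_index:
  assumes "K \<in> carrier_mat (k*d) n" "a < n" "b < n"
  shows "(adj K * projB d k j * K) $$ (a,b) = (\<Sum>s<k*d. if s div d = j then cnj (K $$ (s,a)) * K $$ (s,b) else 0)"
proof -
  have "(adj K * projB d k j) $$ (a,s) = (if s div d = j then cnj (K $$ (s,a)) else 0)" if "s < k*d" for s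
  proof -
    have "(adj K * projB d k j) $$ (a,s) = (\<Sum>t<k*d. cnj (K $$ (t,a)) * projB d k j $$ (t,s))"
      using assms that by (simp add: adj_mult_index[of _ "k*d" n _ "k*d"])
    also have "\<dots> = (\<Sum>t<k*d. if t = s then (if s div d = j then cnj (K $$ (t,a)) else 0) else 0)"
      using that by (intro sum.cong refl) auto
    finally show ?thesis using that by simp
  qed
  note adj_projB = this
  have "(adj K * projB d k j * K) $$ (a,b) = (\<Sum>s<k*d. (adj K * projB d k j) $$ (a,s) * K $$ (s,b))"
    using mult_carrier_mat[OF adj_carrier[OF assms(1)] projB_carrier] assms by (rule mult_index)
  also have "\<dots> = (\<Sum>s<k*d. if s div d = j then cnj (K $$ (s,a)) * K $$ (s,b) else 0)"
    by (intro sum.cong refl) (simp add: adj_projB)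
  finally show ?thesis .
qed

lemma psd_adj_mult_projB_mult:
  assumes K: "K \<in> carrier_mat (k*d) n"
  shows "psd n (adj K * projB d k j * K)"
proof -
  define f where "f s a = (if s div d = j then K $$ (s,a) else 0)" for s a
  have "psd_form n (\<lambda>a b. \<Sum>s<k*d. cnj (f s a) * f s b)"
    by (rule psd_form_gram) simp
  moreover have "psd_form n (\<lambda>a b. (adj K * projB d k j * K) $$ (a,b)) \<longleftrightarrow>
      psd_form n (\<lambda>a b. \<Sum>s<k*d. cnj (f s a) * f s b)"
    by (intro psd_form_cong) (auto simp: adj_mult_projB_mult_index[OF K] f_def intro!: sum.cong)
  moreover have "adj K * projB d k j * K \<in> carrier_mat n n"
    using mult_carrier_mat[OF mult_carrier_mat[OF adj_carrier[OF K] projB_carrier] K] .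
  ultimately show ?thesis
    unfolding psd_iff_psd_form by blast
qed

lemma povm_dual_projB:
  assumes kraus: "is_kraus d (k*d) N K"
  shows "povm d k (\<lambda>j. msum d d (\<lambda>i. adj (K i) * projB d k j * K i) {..<N})"
proof -
  have K: "\<And>i. i < N \<Longrightarrow> K i \<in> carrier_mat (k*d) d" using kraus unfolding is_kraus_def by auto
  have "psd d (msum d d (\<lambda>i. adj (K i) * projB d k j * K i) {..<N})" for j
    using K by (auto intro!: psd_msum psd_adj_mult_projB_mult)
  moreover have "(\<Sum>j<k. msum d d (\<lambda>i. adj (K i) * projB d k j * K i) {..<N} $$ (a,b)) =
      (if a = b then 1 else 0)" if ab: "a < d" "b < d" for a b
  proof -
    have "(\<Sum>j<k. msum d d (\<lambda>i. adj (K i) * projB d k j * K i) {..<N} $$ (a,b)) =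
        (\<Sum>j<k. \<Sum>i<N. \<Sum>s<k*d. if s div d = j then cnj (K i $$ (s,a)) * K i $$ (s,b) else 0)"
      using ab by (simp add: adj_mult_projB_mult_index[OF K])
    also have "\<dots> = (\<Sum>i<N. \<Sum>s<k*d. \<Sum>j<k. if s div d = j then cnj (K i $$ (s,a)) * K i $$ (s,b) else 0)"
      by (rule trans[OF sum.swap], rule sum.cong[OF refl], rule sum.swap)
    also have "\<dots> = (\<Sum>i<N. \<Sum>s<k*d. cnj (K i $$ (s,a)) * K i $$ (s,b))"
      by (rule sum.cong[OF refl], rule sum.cong[OF refl]) (simp add: less_mult_imp_div_less)
    also have "\<dots> = (if a = b then 1 else 0)"
      using kraus ab unfolding is_kraus_iff by blast
    finally show ?thesis .
  qed
  ultimately show ?thesis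
    unfolding povm_iff by blast
qed

lemma channel_measurement_povm:
  assumes "channel d (k*d) \<Phi>"
  obtains E where "povm d k E"
    and "\<And>j \<rho>. \<rho> \<in> carrier_mat d d \<Longrightarrow> mtrace (\<Phi> \<rho> * projB d k j) = mtrace (E j * \<rho>)"
proof -
  obtain N K where kraus: "is_kraus d (k*d) N K"
    and \<Phi>: "\<forall>\<rho> \<in> carrier_mat d d. \<Phi> \<rho> = kraus_map (k*d) N K \<rho>"
    using assms unfolding channel_def by blast
  have K: "\<And>i. i < N \<Longrightarrow> K i \<in> carrier_mat (k*d) d" using kraus unfolding is_kraus_def by auto
  show ?thesis
  proof (rule that[OF povm_dual_projB[OF kraus]])
    fix j and \<rho> :: "complex mat" assume \<rho>: "\<rho> \<in> carrier_mat d d"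
    show "mtrace (\<Phi> \<rho> * projB d k j) = mtrace (msum d d (\<lambda>i. adj (K i) * projB d k j * K i) {..<N} * \<rho>)"
      using \<Phi> \<rho> mtrace_kraus_map_mult[OF K \<rho> projB_carrier] by simp
  qed
qed

lemma MIO_success_subset_povm_success:
  assumes \<rho>: "\<And>j. j < k \<Longrightarrow> \<rho> j \<in> carrier_mat d d"
  shows "{(\<Sum>j<k. p j * Re (mtrace (\<Phi> (\<rho> j) * projB d k j))) |\<Phi>. MIO d (k*d) \<Phi>}
    \<subseteq> {(\<Sum>j<k. p j * Re (mtrace (E j * \<rho> j))) |E. povm d k E}"
proof safe
  fix \<Phi> assume "MIO d (k*d) \<Phi>"
  then obtain E where E: "povm d k E"
    and tr: "\<And>j \<sigma>. \<sigma> \<in> carrier_mat d d \<Longrightarrow> mtrace (\<Phi> \<sigma> * projB d k j) = mtrace (E j * \<sigma>)"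
    using channel_measurement_povm unfolding MIO_def by metis
  have "(\<Sum>j<k. p j * Re (mtrace (\<Phi> (\<rho> j) * projB d k j))) = (\<Sum>j<k. p j * Re (mtrace (E j * \<rho> j)))"
    by (intro sum.cong refl) (simp add: tr \<rho>)
  then show "\<exists>E'. (\<Sum>j<k. p j * Re (mtrace (\<Phi> (\<rho> j) * projB d k j))) = (\<Sum>j<k. p j * Re (mtrace (E' j * \<rho> j)))
      \<and> povm d k E'"
    using E by blast
qed

section \<open>Realising a POVM by an incoherent operation\<close>

lemma sum_lessThan_mult:
  fixes k d :: nat
  shows "(\<Sum>s<k*d. g s) = (\<Sum>j<k. \<Sum>r<d. g (j*d + r))"
proof -
  have "(\<Sum>s<k*d. g s) = (\<Sum>j<k. \<Sum>s\<in>{j*d..<j*d+d}. g s)"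
    by (rule sum.nat_group[symmetric])
  also have "\<dots> = (\<Sum>j<k. \<Sum>r<d. g (j*d + r))"
  proof (rule sum.cong[OF refl])
    fix j
    have "(\<Sum>s\<in>{j*d..<j*d+d}. g s) = (\<Sum>s\<in>{0+j*d..<d+j*d}. g s)"
      by (simp add: add.commute)
    also have "\<dots> = (\<Sum>r\<in>{0..<d}. g (r + j*d))"
      by (rule sum.shift_bounds_nat_ivl)
    finally show "(\<Sum>s\<in>{j*d..<j*d+d}. g s) = (\<Sum>r<d. g (j*d + r))"
      by (simp add: add.commute atLeast0LessThan)
  qed
  finally show ?thesis .
qed

lemma block_index:
  fixes j k d r :: nat
  assumes "r < d"
  shows "(j*d + r) div d = j" "(j*d + r) mod d = r" "j < k \<Longrightarrow> j*d + r < k*d"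
proof -
  show "(j*d + r) div d = j" "(j*d + r) mod d = r" using assms by simp_all
  assume "j < k"
  have "j*d + r < Suc j * d" using assms by simp
  also have "\<dots> \<le> k*d" using \<open>j < k\<close> by (intro mult_right_mono) auto
  finally show "j*d + r < k*d" .
qed

lemma mtrace_mult_projB:
  assumes "X \<in> carrier_mat (k*d) (k*d)" "j < k"
  shows "mtrace (X * projB d k j) = (\<Sum>r<d. X $$ (j*d + r, j*d + r))"
proof -
  have "mtrace (X * projB d k j) = (\<Sum>s<k*d. \<Sum>t<k*d. X $$ (s,t) * projB d k j $$ (t,s))"
    using assms by (simp add: mtrace_mult[of _ "k*d" "k*d"])
  also have "\<dots> = (\<Sum>s<k*d. if s div d = j then X $$ (s,s) else 0)"
  proof (rule sum.cong[OF refl])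
    fix s assume "s \<in> {..<k*d}"
    then have "(\<Sum>t<k*d. X $$ (s,t) * projB d k j $$ (t,s)) =
        (\<Sum>t<k*d. if t = s then (if s div d = j then X $$ (s,s) else 0) else 0)"
      by (intro sum.cong refl) auto
    also have "\<dots> = (if s div d = j then X $$ (s,s) else 0)"
      using \<open>s \<in> {..<k*d}\<close> by simp
    finally show "(\<Sum>t<k*d. X $$ (s,t) * projB d k j $$ (t,s)) = \<dots>" .
  qed
  also have "\<dots> = (\<Sum>r<d. \<Sum>j'<k. if j' = j then X $$ (j'*d + r, j'*d + r) else 0)"
    by (subst sum_lessThan_mult, subst sum.swap) (simp add: block_index cong: if_cong)
  also have "\<dots> = (\<Sum>r<d. X $$ (j*d + r, j*d + r))"
    using assms(2) by simp
  finally show ?thesis .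
qed

text \<open>The operator |s><v| with conj v = w s: its only nonzero row is row s, equal to w s.\<close>
definition rank_one_kraus :: "nat \<Rightarrow> nat \<Rightarrow> (nat \<Rightarrow> nat \<Rightarrow> complex) \<Rightarrow> nat \<Rightarrow> complex mat" where
  "rank_one_kraus m n w s = mat m n (\<lambda>(t,a). if t = s then w s a else 0)"

lemma rank_one_kraus_carrier [simp]: "rank_one_kraus m n w s \<in> carrier_mat m n"
  unfolding rank_one_kraus_def by simp

lemma rank_one_kraus_dim [simp]:
  "dim_row (rank_one_kraus m n w s) = m" "dim_col (rank_one_kraus m n w s) = n"
  unfolding rank_one_kraus_def by simp_all

lemma rank_one_kraus_index [simp]:
  "t < m \<Longrightarrow> a < n \<Longrightarrow> rank_one_kraus m n w s $$ (t,a) = (if t = s then w s a else 0)"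
  unfolding rank_one_kraus_def by simp

lemma is_kraus_rank_one_kraus:
  assumes "\<And>a b. a < n \<Longrightarrow> b < n \<Longrightarrow> (\<Sum>s<m. cnj (w s a) * w s b) = (if a = b then 1 else 0)"
  shows "is_kraus n m m (rank_one_kraus m n w)"
proof -
  have "(\<Sum>t<m. cnj (rank_one_kraus m n w s $$ (t,a)) * rank_one_kraus m n w s $$ (t,b)) = cnj (w s a) * w s b"
    if "s < m" "a < n" "b < n" for s a b
  proof -
    have "(\<Sum>t<m. cnj (rank_one_kraus m n w s $$ (t,a)) * rank_one_kraus m n w s $$ (t,b)) =
        (\<Sum>t<m. if t = s then cnj (w s a) * w s b else 0)"
      using that by (intro sum.cong refl) auto
    then show ?thesis using that by simp
  qed
  then show ?thesis
    unfolding is_kraus_iff using assms by simp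
qed

lemma sandwich_rank_one_kraus:
  assumes "\<rho> \<in> carrier_mat n n" "t < m" "t' < m"
  shows "(rank_one_kraus m n w s * \<rho> * adj (rank_one_kraus m n w s)) $$ (t,t') =
    (if t = s \<and> t' = s then (\<Sum>a<n. \<Sum>b<n. w s a * \<rho> $$ (a,b) * cnj (w s b)) else 0)"
  unfolding sandwich_index[OF rank_one_kraus_carrier assms] using assms by auto

lemma kraus_map_rank_one_kraus_diag:
  assumes "\<rho> \<in> carrier_mat n n" "t < m"
  shows "kraus_map m m (rank_one_kraus m n w) \<rho> $$ (t,t) = (\<Sum>a<n. \<Sum>b<n. w t a * \<rho> $$ (a,b) * cnj (w t b))"
  using assms by (simp add: kraus_map_def sandwich_rank_one_kraus del: index_mult_mat(1))

lemma IO_kraus_map_rank_one_kraus: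
  assumes "\<And>a b. a < n \<Longrightarrow> b < n \<Longrightarrow> (\<Sum>s<m. cnj (w s a) * w s b) = (if a = b then 1 else 0)"
  shows "IO n m (kraus_map m m (rank_one_kraus m n w))"
  unfolding IO_def
proof (intro exI conjI allI impI ballI)
  show "is_kraus n m m (rank_one_kraus m n w)"
    using assms by (rule is_kraus_rank_one_kraus)
next
  fix s \<rho> assume "s < m" "incoherent n \<rho>"
  then have "\<rho> \<in> carrier_mat n n" unfolding incoherent_def density_def psd_def by blast
  then have "\<forall>t<m. \<forall>t'<m. t \<noteq> t' \<longrightarrow>
      (rank_one_kraus m n w s * \<rho> * adj (rank_one_kraus m n w s)) $$ (t,t') = 0"
    by (simp add: sandwich_rank_one_kraus del: index_mult_mat(1))
  moreover have "dim_row (rank_one_kraus m n w s * \<rho> * adj (rank_one_kraus m n w s)) = m"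
    "dim_col (rank_one_kraus m n w s * \<rho> * adj (rank_one_kraus m n w s)) = m"
    by simp_all
  ultimately show "diagonal_mat (rank_one_kraus m n w s * \<rho> * adj (rank_one_kraus m n w s))"
    unfolding diagonal_mat_def by metis
qed simp

lemma mtrace_rank_one_kraus_projB:
  assumes "j < k" "\<rho> \<in> carrier_mat d d"
  shows "mtrace (kraus_map (k*d) (k*d) (rank_one_kraus (k*d) d w) \<rho> * projB d k j) =
    mtrace (mat d d (\<lambda>(a,b). \<Sum>r<d. cnj (w (j*d + r) a) * w (j*d + r) b) * \<rho>)"
proof -
  let ?G = "mat d d (\<lambda>(a,b). \<Sum>r<d. cnj (w (j*d + r) a) * w (j*d + r) b)"
  have "mtrace (kraus_map (k*d) (k*d) (rank_one_kraus (k*d) d w) \<rho> * projB d k j) =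
      (\<Sum>r<d. \<Sum>a<d. \<Sum>b<d. w (j*d + r) a * \<rho> $$ (a,b) * cnj (w (j*d + r) b))"
    using assms by (simp add: mtrace_mult_projB kraus_map_rank_one_kraus_diag block_index)
  also have "\<dots> = (\<Sum>a<d. \<Sum>b<d. \<Sum>r<d. w (j*d + r) a * \<rho> $$ (a,b) * cnj (w (j*d + r) b))"
    by (rule trans[OF sum.swap], rule sum.cong[OF refl], rule sum.swap)
  also have "\<dots> = (\<Sum>a<d. \<Sum>b<d. ?G $$ (b,a) * \<rho> $$ (a,b))"
    by (simp add: sum_distrib_left sum_distrib_right mult_ac)
  also have "\<dots> = mtrace (?G * \<rho>)"
    by (rule trans[OF sum.swap]) (use assms(2) in \<open>simp add: mtrace_mult[of _ d d]\<close>)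
  finally show ?thesis .
qed

lemma povm_realized_by_IO:
  assumes povm: "povm d k E"
  obtains \<Phi> where "IO d (k*d) \<Phi>"
    and "\<And>j \<rho>. j < k \<Longrightarrow> \<rho> \<in> carrier_mat d d \<Longrightarrow> mtrace (\<Phi> \<rho> * projB d k j) = mtrace (E j * \<rho>)"
proof -
  have "\<forall>j<k. \<exists>w. \<forall>a<d. \<forall>b<d. E j $$ (a,b) = (\<Sum>r<d. cnj (w r a) * w r b)"
    using povm psd_gram_decomposition unfolding povm_iff by metis
  then obtain W where W: "\<And>j a b. j < k \<Longrightarrow> a < d \<Longrightarrow> b < d \<Longrightarrow> E j $$ (a,b) = (\<Sum>r<d. cnj (W j r a) * W j r b)"
    by metis
  define w where "w s = W (s div d) (s mod d)" for s
  have w_block: "w (j*d + r) = W j r" if "r < d" for j r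
    using that by (simp add: w_def block_index)
  have E: "E j = mat d d (\<lambda>(a,b). \<Sum>r<d. cnj (w (j*d + r) a) * w (j*d + r) b)" if "j < k" for j
    by (rule eq_matI) (use povm W w_block that in \<open>auto simp: povm_iff psd_def\<close>)
  have "(\<Sum>s<k*d. cnj (w s a) * w s b) = (if a = b then 1 else 0)" if ab: "a < d" "b < d" for a b
  proof -
    have "(\<Sum>s<k*d. cnj (w s a) * w s b) = (\<Sum>j<k. \<Sum>r<d. cnj (W j r a) * W j r b)"
      by (simp add: sum_lessThan_mult w_block)
    also have "\<dots> = (\<Sum>j<k. E j $$ (a,b))"
      using W ab by simp
    also have "\<dots> = (if a = b then 1 else 0)"
      using povm ab unfolding povm_iff by blast
    finally show ?thesis .
  qed
  then have "IO d (k*d) (kraus_map (k*d) (k*d) (rank_one_kraus (k*d) d w))"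
    by (rule IO_kraus_map_rank_one_kraus)
  then show ?thesis
    by (rule that) (simp add: mtrace_rank_one_kraus_projB E)
qed

lemma povm_success_subset_IO_success:
  assumes \<rho>: "\<And>j. j < k \<Longrightarrow> \<rho> j \<in> carrier_mat d d"
  shows "{(\<Sum>j<k. p j * Re (mtrace (E j * \<rho> j))) |E. povm d k E}
    \<subseteq> {(\<Sum>j<k. p j * Re (mtrace (\<Phi> (\<rho> j) * projB d k j))) |\<Phi>. IO d (k*d) \<Phi>}"
proof safe
  fix E assume "povm d k E"
  then obtain \<Phi> where \<Phi>: "IO d (k*d) \<Phi>"
    and tr: "\<And>j \<sigma>. j < k \<Longrightarrow> \<sigma> \<in> carrier_mat d d \<Longrightarrow> mtrace (\<Phi> \<sigma> * projB d k j) = mtrace (E j * \<sigma>)"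
    using povm_realized_by_IO by metis
  have "(\<Sum>j<k. p j * Re (mtrace (E j * \<rho> j))) = (\<Sum>j<k. p j * Re (mtrace (\<Phi> (\<rho> j) * projB d k j)))"
    by (intro sum.cong refl) (simp add: tr \<rho>)
  then show "\<exists>\<Phi>'. (\<Sum>j<k. p j * Re (mtrace (E j * \<rho> j))) = (\<Sum>j<k. p j * Re (mtrace (\<Phi>' (\<rho> j) * projB d k j)))
      \<and> IO d (k*d) \<Phi>'"
    using \<Phi> by blast
qed

theorem proposition1:
  fixes d k :: nat and p :: "nat \<Rightarrow> real" and \<rho> :: "nat \<Rightarrow> complex mat"
  assumes "d \<ge> 1"
    and "ensemble d k p \<rho>"
  shows "Psuc d k p \<rho> = Ptilde IO d k p \<rho> \<and> Ptilde IO d k p \<rho> = Ptilde MIO d k p \<rho>"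
proof -
  have \<rho>: "\<And>j. j < k \<Longrightarrow> \<rho> j \<in> carrier_mat d d"
    using assms(2) unfolding ensemble_def density_def psd_def by blast
  let ?P = "{(\<Sum>j<k. p j * Re (mtrace (E j * \<rho> j))) |E. povm d k E}"
  let ?S = "\<lambda>Free. {(\<Sum>j<k. p j * Re (mtrace (\<Phi> (\<rho> j) * projB d k j))) |\<Phi>. Free d (k*d) \<Phi>}"
  have IO_MIO: "?S IO \<subseteq> ?S MIO"
    by (auto intro: IO_imp_MIO)
  have MIO_P: "?S MIO \<subseteq> ?P"
    by (rule MIO_success_subset_povm_success[OF \<rho>])
  have P_IO: "?P \<subseteq> ?S IO"
    by (rule povm_success_subset_IO_success[OF \<rho>])
  have "?P = ?S IO"
    using P_IO subset_trans[OF IO_MIO MIO_P] by (rule subset_antisym)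
  moreover have "?S IO = ?S MIO"
    using IO_MIO subset_trans[OF MIO_P P_IO] by (rule subset_antisym)
  ultimately show ?thesis
    unfolding Psuc_def Ptilde_def by simp
qed

end
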